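(* Let $G=(V,E)$ be a $d$-regular graph on $n$ vertices whose conductance $\phi^G(V)$ is at least $\varphi$. Let each edge $e\in E$ independently receive a uniformly random label $Y(e)\in\{0,1\}$, and let $G'=(V\times\{0,1\},E')$ be the graph where, for each $e=(u,v)\in E$, $E'$ contains the two edges $(u^0,v^0),(u^1,v^1)$ if $Y(e)=0$ and the two edges $(u^0,v^1),(u^1,v^0)$ if $Y(e)=1$ (writing $v^b$ for $(v,b)$). Then with probability at least $1-2^{2n}e^{-dn/256}$, $G'$ has conductance $\phi^{G'}(V\times\{0,1\})\ge\min(\varphi/4,1/32)$.
   Context: $\mathrm{vol}(S)=\sum_{v\in S}\deg(v)$; $\phi^G_C(S)=|E(S,C\setminus S)|/\mathrm{vol}(S)$; the conductance of $G$ is $\phi^G(V)=\min\{\phi^G_V(S):0<\mathrm{vol}(S)\le\mathrm{vol}(V)/2\}$. *)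

theory Defs
  imports "HOL-Probability.Probability"
begin

definition simple_graph :: "'a set \<Rightarrow> 'a set set \<Rightarrow> bool" where
  "simple_graph V E \<longleftrightarrow> finite V \<and> (\<forall>e\<in>E. \<exists>u v. e = {u, v} \<and> u \<noteq> v \<and> u \<in> V \<and> v \<in> V)"

definition deg :: "'a set set \<Rightarrow> 'a \<Rightarrow> nat" where
  "deg E v = card {e \<in> E. v \<in> e}"

definition regular :: "'a set \<Rightarrow> 'a set set \<Rightarrow> nat \<Rightarrow> bool" where
  "regular V E d \<longleftrightarrow> (\<forall>v\<in>V. deg E v = d)"

definition vol :: "'a set set \<Rightarrow> 'a set \<Rightarrow> nat" where
  "vol E S = (\<Sum>v\<in>S. deg E v)"

definition cut_edges :: "'a set set \<Rightarrow> 'a set \<Rightarrow> 'a set \<Rightarrow> nat" where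
  "cut_edges E S T = card {e \<in> E. \<exists>u v. e = {u, v} \<and> u \<in> S \<and> v \<in> T}"

definition cond_set :: "'a set set \<Rightarrow> 'a set \<Rightarrow> 'a set \<Rightarrow> real" where
  "cond_set E C S = real (cut_edges E S (C - S)) / real (vol E S)"

definition conductance :: "'a set \<Rightarrow> 'a set set \<Rightarrow> real" where
  "conductance V E = Min {cond_set E V S | S. S \<subseteq> V \<and> 0 < vol E S \<and> real (vol E S) \<le> real (vol E V) / 2}"

text \<open>The 2-lift of E with labels Y (True = label 1): vertex (v,b) is v^b;
  edge {u,v} yields {u^b, v^(b xor Y{u,v})} for b in {0,1}.\<close>
definition lift_edges :: "'a set set \<Rightarrow> ('a set \<Rightarrow> bool) \<Rightarrow> ('a \<times> bool) set set" where
  "lift_edges E Y = {{(u, b), (v, b \<noteq> Y {u, v})} | u v b. {u, v} \<in> E \<and> u \<noteq> v}"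

end

theory Submission
  imports Defs
begin

text \<open>Split a vertex set \<open>S\<close> of the lift into its shadow \<open>U = fst ` S\<close>, the base vertices \<open>B\<close>
  whose two copies both lie in \<open>S\<close>, and those \<open>A = U - B\<close> with exactly one copy in \<open>S\<close>.
  Every base edge leaving \<open>U\<close> or leaving \<open>B\<close> has a lift leaving \<open>S\<close>, so the cut of \<open>S\<close>
  is at least \<open>cut(U) + cut(B)\<close>, and the conductance of the base graph bounds this by
  \<open>\<phi> d |S| / 4\<close> unless \<open>|A| > 3n/4\<close>. In that case each edge at \<open>A\<close> contributes its lifts
  to the cut unless both ends lie in \<open>A\<close> and its label is the one that keeps both lifts on one
  side; a cut below \<open>d |S| / 32\<close> forces this for \<open>23/32\<close> of all edges, which by an
  exponential-moment count happens for at most \<open>2^|E| e^(-dn/256)\<close> labelings. A union bound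
  over the at most \<open>2^(2n)\<close> sets \<open>S\<close> with \<open>|S| \<le> n\<close> finishes the proof.\<close>

lemma card_filter_eq_sum_of_bool:
  "finite X \<Longrightarrow> real (card {x \<in> X. P x}) = (\<Sum>x\<in>X. of_bool (P x))"
  using sum.inter_filter[of X "\<lambda>_. 1::real" P] by (simp add: of_bool_def)

lemma card_filter_doubleton:
  assumes "a \<noteq> b" shows "card {x \<in> {a, b}. P x} = of_bool (P a) + of_bool (P b)"
proof -
  have "card {x \<in> {a, b}. P x} = (\<Sum>x\<in>{a, b}. if P x then 1 else 0)"
    using sum.inter_filter[of "{a, b}" "\<lambda>_. 1::nat" P] by simp
  thus ?thesis using assms by simp
qed

text \<open>Markov's inequality for \<open>exp (hits - t)\<close>: its sum over all labelings factorises over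
  \<open>E\<close>, and each factor is at most \<open>1 + e\<close>.\<close>
lemma card_PiE_many_hits_le:
  fixes E :: "'e set" and Q :: "'e \<Rightarrow> bool \<Rightarrow> bool" and t :: real
  assumes fin: "finite E" and at_most_one: "\<And>e. \<not> (Q e True \<and> Q e False)"
  shows "real (card {Y \<in> PiE E (\<lambda>_. UNIV). t \<le> real (card {e \<in> E. Q e (Y e)})})
           \<le> exp (- t) * (1 + exp 1) ^ card E"
proof -
  let ?\<Omega> = "PiE E (\<lambda>_. UNIV :: bool set)"
  let ?hits = "\<lambda>Y. real (card {e \<in> E. Q e (Y e)})"
  let ?w = "\<lambda>e b. if Q e b then exp 1 else 1 :: real"
  have "real (card {Y \<in> ?\<Omega>. t \<le> ?hits Y}) = (\<Sum>Y\<in>{Y \<in> ?\<Omega>. t \<le> ?hits Y}. 1)"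
    by simp
  also have "\<dots> \<le> (\<Sum>Y\<in>{Y \<in> ?\<Omega>. t \<le> ?hits Y}. exp (?hits Y - t))"
    by (rule sum_mono) simp
  also have "\<dots> \<le> (\<Sum>Y\<in>?\<Omega>. exp (?hits Y - t))"
    by (rule sum_mono2) (use fin in \<open>auto simp: finite_PiE\<close>)
  also have "\<dots> = exp (- t) * (\<Sum>Y\<in>?\<Omega>. \<Prod>e\<in>E. ?w e (Y e))"
  proof -
    have "exp (?hits Y - t) = exp (- t) * (\<Prod>e\<in>E. exp (of_bool (Q e (Y e))))" for Y
      by (simp add: card_filter_eq_sum_of_bool[OF fin] exp_diff exp_sum[OF fin] exp_minus
          field_simps)
    moreover have "exp (of_bool (Q e b)) = ?w e b" for e b by simp
    ultimately show ?thesis by (simp add: sum_distrib_left)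
  qed
  also have "(\<Sum>Y\<in>?\<Omega>. \<Prod>e\<in>E. ?w e (Y e)) = (\<Prod>e\<in>E. \<Sum>b\<in>UNIV. ?w e b)"
    by (rule prod_sum_PiE[symmetric]) (use fin in auto)
  also have "\<dots> \<le> (\<Prod>e\<in>E. 1 + exp 1)"
    using at_most_one by (intro prod_mono) (auto simp: UNIV_bool)
  finally show ?thesis by simp
qed

text \<open>The exponent \<open>91/128 = 23/32 - 1/128\<close> is chosen so that \<open>1 + e \<le> 2 e^(91/128)\<close>.\<close>
lemma exp_neg_mult_one_plus_exp_le:
  "exp (- (23 / 32 * real m)) * (1 + exp 1) ^ m \<le> 2 ^ m * exp (- (real m / 128))"
proof -
  have "1 + 91/128 + (91/128)^2/2 \<le> exp (91/128::real)"
    by (rule exp_lower_Taylor_quadratic) simp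
  moreover have "exp 1 < (272/100::real)" by (rule e_less_272)
  ultimately have "1 + exp 1 \<le> 2 * exp (91/128::real)" by (simp add: power2_eq_square)
  hence "(1 + exp 1) ^ m \<le> (2 * exp (91/128::real)) ^ m"
    by (rule power_mono) (simp add: add_nonneg_nonneg)
  also have "\<dots> = 2 ^ m * exp (real m * (91/128))"
    by (simp only: power_mult_distrib exp_of_nat_mult)
  finally have "exp (- (23 / 32 * real m)) * (1 + exp 1) ^ m
      \<le> 2 ^ m * (exp (- (23 / 32 * real m)) * exp (real m * (91/128)))"
    by (simp add: mult_left_mono mult.left_commute)
  also have "exp (- (23 / 32 * real m)) * exp (real m * (91/128)) = exp (- (real m / 128))"
    by (simp flip: exp_add)
  finally show ?thesis .
qed

lemma prob_pmf_of_set_ge: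
  assumes "finite \<Omega>" "\<Omega> \<noteq> {}" "B \<subseteq> \<Omega>" "\<Omega> - B \<subseteq> G"
    and "real (card B) \<le> r * real (card \<Omega>)"
  shows "measure_pmf.prob (pmf_of_set \<Omega>) G \<ge> 1 - r"
proof -
  have pos: "real (card \<Omega>) > 0" using assms(1,2) by (simp add: card_gt_0_iff)
  have "card \<Omega> = card (\<Omega> - B) + card B"
    using assms(1,3) by (metis card_Diff_subset finite_subset le_add_diff_inverse2 card_mono)
  moreover have "card (\<Omega> - B) \<le> card (\<Omega> \<inter> G)"
    using assms(1,4) by (intro card_mono) auto
  ultimately have "(1 - r) * real (card \<Omega>) \<le> real (card (\<Omega> \<inter> G))"
    using assms(5) by (simp add: algebra_simps)
  thus ?thesis
    using pos by (simp add: measure_pmf_of_set[OF assms(2,1)] pos_le_divide_eq)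
qed

locale regular_graph =
  fixes V :: "'a set" and E :: "'a set set" and d :: nat
  assumes simple: "simple_graph V E" and regular: "regular V E d"
begin

lemma finite_V: "finite V"
  using simple by (simp add: simple_graph_def)

lemma edgeE:
  assumes "e \<in> E" obtains u v where "e = {u, v}" "u \<noteq> v" "u \<in> V" "v \<in> V"
  using simple assms unfolding simple_graph_def by blast

lemma edge_subset: "e \<in> E \<Longrightarrow> e \<subseteq> V"
  by (metis edgeE insert_subset empty_subsetI)

lemma finite_E: "finite E"
  by (rule finite_subset[of _ "Pow V"]) (use edge_subset finite_V in auto)

lemma deg_eq: "v \<in> V \<Longrightarrow> deg E v = d"
  using regular by (simp add: regular_def)

lemma vol_eq: "T \<subseteq> V \<Longrightarrow> vol E T = d * card T"
  unfolding vol_def using deg_eq by (simp add: subset_iff)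

lemma sum_deg_eq_sum_card_Int:
  assumes "T \<subseteq> V" shows "(\<Sum>v\<in>T. deg E v) = (\<Sum>e\<in>E. card (e \<inter> T))"
proof -
  have fin: "finite T" using assms finite_V finite_subset by blast
  have "(\<Sum>v\<in>T. deg E v) = (\<Sum>v\<in>T. \<Sum>e\<in>E. if v \<in> e then 1 else 0)"
    unfolding deg_def by (simp add: sum.inter_filter[OF finite_E, symmetric])
  also have "\<dots> = (\<Sum>e\<in>E. \<Sum>v\<in>T. if v \<in> e then 1 else 0)" by (rule sum.swap)
  also have "\<dots> = (\<Sum>e\<in>E. card (e \<inter> T))"
    using sum.inter_filter[OF fin, of "\<lambda>_. 1::nat", symmetric]
    by (simp add: Int_def conj_commute)
  finally show ?thesis .
qed

lemma two_card_E: "2 * card E = d * card V"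
proof -
  have "(\<Sum>e\<in>E. card (e \<inter> V)) = (\<Sum>e\<in>E. 2)"
    by (rule sum.cong) (auto elim!: edgeE simp: Int_absorb2)
  thus ?thesis
    using sum_deg_eq_sum_card_Int[of V] deg_eq by (simp add: mult.commute)
qed

lemma cut_edges_commute: "cut_edges E S T = cut_edges E T S"
  unfolding cut_edges_def by (metis insert_commute)

lemma cut_ge_conductance:
  assumes "conductance V E \<ge> \<phi>" "d > 0" "T \<subseteq> V" "2 * card T \<le> card V"
  shows "\<phi> * d * card T \<le> cut_edges E T (V - T)"
proof (cases "T = {}")
  case True thus ?thesis by (simp add: cut_edges_def)
next
  case False
  let ?X = "{cond_set E V S | S. S \<subseteq> V \<and> 0 < vol E S \<and> real (vol E S) \<le> real (vol E V) / 2}"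
  have "finite ?X"
    by (rule finite_subset[of _ "cond_set E V ` Pow V"]) (use finite_V in auto)
  have card_T: "card T > 0" using False assms(3) finite_V finite_subset by fastforce
  have "2 * (d * card T) \<le> d * card V" using assms(4) by simp
  hence "real (vol E T) \<le> real (vol E V) / 2" "0 < vol E T"
    using vol_eq[OF assms(3)] vol_eq[of V] assms(2) card_T by simp_all
  hence "cond_set E V T \<in> ?X" using assms(3) by blast
  from Min_le[OF \<open>finite ?X\<close> this] have "\<phi> \<le> cond_set E V T"
    using assms(1) unfolding conductance_def by linarith
  hence "\<phi> \<le> real (cut_edges E T (V - T)) / (real d * real (card T))"
    unfolding cond_set_def vol_eq[OF assms(3)] by simp
  thus ?thesis
    using assms(2) card_T by (simp add: pos_le_divide_eq mult.commute mult.left_commute)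
qed

lemma cut_ge_conductance_min:
  assumes "conductance V E \<ge> \<phi>" "\<phi> \<ge> 0" "d > 0" "T \<subseteq> V"
  shows "\<phi> * d * min (card T) (card V - card T) \<le> cut_edges E T (V - T)"
proof (cases "2 * card T \<le> card V")
  case True
  thus ?thesis
    using cut_ge_conductance[OF assms(1,3,4)] assms(2)
    by (smt (verit) min.cobounded1 mult_left_mono of_nat_0_le_iff of_nat_le_iff zero_le_mult_iff)
next
  case False
  have "card (V - T) = card V - card T"
    using assms(4) finite_V by (simp add: card_Diff_subset finite_subset)
  moreover have "V - (V - T) = T" using assms(4) by blast
  ultimately have "\<phi> * d * (card V - card T) \<le> cut_edges E T (V - T)"
    using cut_ge_conductance[OF assms(1,3), of "V - T"] False cut_edges_commute by simp
  thus ?thesis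
    using assms(2)
    by (smt (verit) min.cobounded2 mult_left_mono of_nat_0_le_iff of_nat_le_iff zero_le_mult_iff)
qed

lemma conductance_geI:
  fixes c :: real
  assumes "d > 0" "2 \<le> card V"
    and cut: "\<And>S. S \<subseteq> V \<Longrightarrow> 0 < card S \<Longrightarrow> 2 * card S \<le> card V
                \<Longrightarrow> c * d * card S \<le> cut_edges E S (V - S)"
  shows "c \<le> conductance V E"
proof -
  let ?X = "{cond_set E V S | S. S \<subseteq> V \<and> 0 < vol E S \<and> real (vol E S) \<le> real (vol E V) / 2}"
  have "finite ?X"
    by (rule finite_subset[of _ "cond_set E V ` Pow V"]) (use finite_V in auto)
  obtain v where "v \<in> V" using assms(2) by fastforce
  have "real d \<le> real (d * card V) / 2"
    using mult_left_mono[OF assms(2), of d] by linarith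
  hence "cond_set E V {v} \<in> ?X"
    using assms(1) vol_eq[of "{v}"] vol_eq[of V] \<open>v \<in> V\<close> by auto
  hence "?X \<noteq> {}" by blast
  moreover have "c \<le> x" if x: "x \<in> ?X" for x
  proof -
    obtain S where S: "x = cond_set E V S" "S \<subseteq> V" "0 < vol E S"
        "real (vol E S) \<le> real (vol E V) / 2"
      using x by blast
    have "0 < card S" "real (d * card S) \<le> real (d * card V) / 2"
      using S(2-4) vol_eq[OF S(2)] vol_eq[of V] by auto
    hence "0 < card S" "2 * card S \<le> card V"
      using assms(1) by simp_all
    thus ?thesis
      using cut[OF S(2)] assms(1) unfolding S(1) cond_set_def vol_eq[OF S(2)]
      by (simp add: pos_le_divide_eq mult.commute mult.left_commute)
  qed
  ultimately show ?thesis
    using \<open>finite ?X\<close> unfolding conductance_def by (intro Min.boundedI) auto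
qed

end

lemma doubleton_crosses_iff:
  "a \<in> W \<Longrightarrow> b \<in> W \<Longrightarrow> (\<exists>p q. {a, b} = {p, q} \<and> p \<in> S \<and> q \<in> W - S) \<longleftrightarrow> (a \<in> S) \<noteq> (b \<in> S)"
  by (auto simp: doubleton_eq_iff)

definition fibre_cut :: "('a \<times> bool) set set \<Rightarrow> ('a \<times> bool) set \<Rightarrow> ('a \<times> bool) set \<Rightarrow> 'a set \<Rightarrow> nat"
  where "fibre_cut F W S e = card {f \<in> F. fst ` f = e \<and> (\<exists>p q. f = {p, q} \<and> p \<in> S \<and> q \<in> W - S)}"

context regular_graph
begin

lemma lift_edge_fst: "f \<in> lift_edges E Y \<Longrightarrow> fst ` f \<in> E"
  unfolding lift_edges_def by auto

lemma finite_lift_edges: "finite (lift_edges E Y)"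
proof (rule finite_subset[of _ "Pow (V \<times> UNIV)"])
  show "lift_edges E Y \<subseteq> Pow (V \<times> UNIV)"
    unfolding lift_edges_def using edge_subset by auto
qed (simp add: finite_V)

lemma lift_edges_fibre:
  assumes "e \<in> E" "e = {u, v}" "u \<noteq> v"
  shows "{f \<in> lift_edges E Y. fst ` f = e} = {{(u, False), (v, Y e)}, {(u, True), (v, \<not> Y e)}}"
proof
  show "{f \<in> lift_edges E Y. fst ` f = e} \<subseteq> {{(u, False), (v, Y e)}, {(u, True), (v, \<not> Y e)}}"
  proof
    fix f assume "f \<in> {f \<in> lift_edges E Y. fst ` f = e}"
    then obtain u' v' b where f: "f = {(u', b), (v', b \<noteq> Y {u', v'})}" "u' \<noteq> v'"
      and "fst ` f = e" unfolding lift_edges_def by blast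
    hence uv': "{u', v'} = e" by auto
    hence "(u' = u \<and> v' = v) \<or> (u' = v \<and> v' = u)" using assms(2) by (simp add: doubleton_eq_iff)
    thus "f \<in> {{(u, False), (v, Y e)}, {(u, True), (v, \<not> Y e)}}"
      using f(1) unfolding uv' by (cases b; cases "Y e") (auto simp: insert_commute)
  qed
next
  have "{(u, b), (v, b \<noteq> Y e)} \<in> lift_edges E Y" for b
    unfolding lift_edges_def using assms by blast
  from this[of False] this[of True]
  show "{{(u, False), (v, Y e)}, {(u, True), (v, \<not> Y e)}} \<subseteq> {f \<in> lift_edges E Y. fst ` f = e}"
    using assms(2) by auto
qed

lemma card_lift_edges_filter:
  "card {f \<in> lift_edges E Y. P f} = (\<Sum>e\<in>E. card {f \<in> lift_edges E Y. fst ` f = e \<and> P f})"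
proof -
  have "(\<Sum>e\<in>E. \<Sum>f\<in>{x. x \<in> {f \<in> lift_edges E Y. P f} \<and> fst ` x = e}. (1::nat))
      = (\<Sum>f\<in>{f \<in> lift_edges E Y. P f}. 1)"
    by (rule sum.group) (use finite_lift_edges finite_E lift_edge_fst in auto)
  thus ?thesis by (simp add: conj_commute conj_left_commute)
qed

lemma card_lift_edges_fibre_filter:
  assumes "e \<in> E" "e = {u, v}" "u \<noteq> v"
  shows "card {f \<in> lift_edges E Y. fst ` f = e \<and> P f}
           = of_bool (P {(u, False), (v, Y e)}) + of_bool (P {(u, True), (v, \<not> Y e)})"
proof -
  have "{f \<in> lift_edges E Y. fst ` f = e \<and> P f} = {f \<in> {f \<in> lift_edges E Y. fst ` f = e}. P f}"
    by blast
  also have "\<dots> = {f \<in> {{(u, False), (v, Y e)}, {(u, True), (v, \<not> Y e)}}. P f}"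
    by (simp only: lift_edges_fibre[OF assms])
  finally have fibre: "{f \<in> lift_edges E Y. fst ` f = e \<and> P f}
      = {f \<in> {{(u, False), (v, Y e)}, {(u, True), (v, \<not> Y e)}}. P f}" .
  have "(u, False) \<notin> {(u, True), (v, \<not> Y e)}"
    using assms(3) by simp
  hence "{(u, False), (v, Y e)} \<noteq> {(u, True), (v, \<not> Y e)}" by blast
  thus ?thesis unfolding fibre by (rule card_filter_doubleton)
qed

lemma deg_lift_edges:
  assumes "w \<in> V" shows "deg (lift_edges E Y) (w, b) = d"
proof -
  have "deg (lift_edges E Y) (w, b) = (\<Sum>e\<in>E. card {f \<in> lift_edges E Y. fst ` f = e \<and> (w, b) \<in> f})"
    unfolding deg_def by (rule card_lift_edges_filter)
  also have "\<dots> = (\<Sum>e\<in>E. if w \<in> e then 1 else 0)"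
  proof (rule sum.cong[OF refl])
    fix e assume "e \<in> E"
    then obtain u v where uv: "e = {u, v}" "u \<noteq> v" by (rule edgeE)
    show "card {f \<in> lift_edges E Y. fst ` f = e \<and> (w, b) \<in> f} = (if w \<in> e then 1 else 0)"
      unfolding card_lift_edges_fibre_filter[OF \<open>e \<in> E\<close> uv] using uv
      by (cases b; cases "Y e"; cases "w = u"; cases "w = v"; simp)
  qed
  also have "\<dots> = deg E w"
    unfolding deg_def by (simp add: sum.inter_filter[OF finite_E, symmetric])
  finally show ?thesis using deg_eq assms by simp
qed

lemma regular_graph_lift: "regular_graph (V \<times> UNIV) (lift_edges E Y) d"
proof
  have "\<exists>p q. f = {p, q} \<and> p \<noteq> q \<and> p \<in> V \<times> UNIV \<and> q \<in> V \<times> UNIV"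
    if f_lift: "f \<in> lift_edges E Y" for f
  proof -
    obtain u v b where f: "f = {(u, b), (v, b \<noteq> Y {u, v})}" "{u, v} \<in> E" "u \<noteq> v"
      using f_lift unfolding lift_edges_def by blast
    have "u \<in> V" "v \<in> V" using edge_subset[OF f(2)] by auto
    thus ?thesis using f(1,3) by blast
  qed
  thus "simple_graph (V \<times> UNIV) (lift_edges E Y)"
    unfolding simple_graph_def using finite_V by simp
  show "regular (V \<times> UNIV) (lift_edges E Y) d"
    unfolding regular_def using deg_lift_edges by auto
qed

lemma cut_lift_edges_eq_sum:
  "cut_edges (lift_edges E Y) S (V \<times> UNIV - S) = (\<Sum>e\<in>E. fibre_cut (lift_edges E Y) (V \<times> UNIV) S e)"
  unfolding cut_edges_def fibre_cut_def by (rule card_lift_edges_filter)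

lemma fibre_cut_lift_edges:
  assumes "e \<in> E" "e = {u, v}" "u \<noteq> v" "u \<in> V" "v \<in> V"
  shows "fibre_cut (lift_edges E Y) (V \<times> UNIV) S e
           = of_bool (((u, False) \<in> S) \<noteq> ((v, Y e) \<in> S)) + of_bool (((u, True) \<in> S) \<noteq> ((v, \<not> Y e) \<in> S))"
proof -
  have mem: "(u, b) \<in> V \<times> UNIV" "(v, b) \<in> V \<times> UNIV" for b using assms(4,5) by auto
  show ?thesis
    unfolding fibre_cut_def card_lift_edges_fibre_filter[OF assms(1-3)]
    by (simp only: doubleton_crosses_iff mem)
qed

end

definition doubly_covered :: "('a \<times> bool) set \<Rightarrow> 'a set" where
  "doubly_covered S = {w. (w, False) \<in> S \<and> (w, True) \<in> S}"

definition singly_covered :: "('a \<times> bool) set \<Rightarrow> 'a set" where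
  "singly_covered S = {w. ((w, False) \<in> S) \<noteq> ((w, True) \<in> S)}"

text \<open>For an edge with both ends singly covered by \<open>S\<close>, the label under which neither of its
  two lifts crosses the cut of \<open>S\<close>.\<close>
definition sealing_label :: "('a \<times> bool) set \<Rightarrow> 'a set \<Rightarrow> bool" where
  "sealing_label S e \<longleftrightarrow> card {w \<in> e. (w, False) \<in> S} = 1"

lemma fst_image_bool_pairs: "fst ` S = {w. (w, False) \<in> S \<or> (w, True) \<in> S}"
proof (rule set_eqI)
  fix w show "w \<in> fst ` S \<longleftrightarrow> w \<in> {w. (w, False) \<in> S \<or> (w, True) \<in> S}"
  proof
    assume "w \<in> fst ` S"
    then obtain b where "(w, b) \<in> S" by force
    thus "w \<in> {w. (w, False) \<in> S \<or> (w, True) \<in> S}" by (cases b) auto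
  qed force
qed

lemma card_eq_card_fst_image_plus_doubly:
  assumes "finite S" shows "card S = card (fst ` S) + card (doubly_covered S)"
proof -
  let ?S0 = "{w. (w, False) \<in> S}" and ?S1 = "{w. (w, True) \<in> S}"
  have fin: "finite ?S0" "finite ?S1"
    by (rule rev_finite_subset[OF finite_imageI[OF assms, of fst]], force)+
  have "S = (\<lambda>w. (w, False)) ` ?S0 \<union> (\<lambda>w. (w, True)) ` ?S1"
  proof (rule set_eqI)
    fix p :: "'a \<times> bool"
    obtain w b where "p = (w, b)" by fastforce
    thus "p \<in> S \<longleftrightarrow> p \<in> (\<lambda>w. (w, False)) ` ?S0 \<union> (\<lambda>w. (w, True)) ` ?S1"
      by (cases b) auto
  qed
  also have "card \<dots> = card ((\<lambda>w. (w, False)) ` ?S0) + card ((\<lambda>w. (w, True)) ` ?S1)"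
    by (rule card_Un_disjoint) (use fin in auto)
  finally have "card S = card ?S0 + card ?S1"
    by (simp add: card_image inj_on_def)
  moreover have "fst ` S = ?S0 \<union> ?S1" "doubly_covered S = ?S0 \<inter> ?S1"
    unfolding fst_image_bool_pairs doubly_covered_def by auto
  ultimately show ?thesis using card_Un_Int[OF fin] by simp
qed

lemma card_fst_image_eq_singly_plus_doubly:
  assumes "finite S" shows "card (fst ` S) = card (singly_covered S) + card (doubly_covered S)"
proof -
  have "fst ` S = singly_covered S \<union> doubly_covered S"
    unfolding fst_image_bool_pairs singly_covered_def doubly_covered_def by auto
  moreover have "singly_covered S \<inter> doubly_covered S = {}"
    unfolding singly_covered_def doubly_covered_def by auto
  moreover have "finite (singly_covered S \<union> doubly_covered S)"
    using calculation(1) assms by (metis finite_imageI)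
  ultimately show ?thesis by (simp add: card_Un_disjoint)
qed

text \<open>The weight \<open>min |U| (N - |U|) + |B|\<close> is what the base conductance yields for the cuts of
  \<open>U\<close> and \<open>B\<close>.\<close>
lemma card_le_four_cover_weight:
  assumes "finite S" "card (fst ` S) \<le> N" "card S \<le> N" "4 * card (singly_covered S) \<le> 3 * N"
  shows "card S \<le> 4 * (min (card (fst ` S)) (N - card (fst ` S)) + card (doubly_covered S))"
proof (cases "card (fst ` S) \<le> N - card (fst ` S)")
  case True
  thus ?thesis using card_eq_card_fst_image_plus_doubly[OF assms(1)] by simp
next
  case False
  have "N - card (fst ` S) + card (fst ` S) = N" using assms(2) by simp
  thus ?thesis
    using False assms(3,4) card_eq_card_fst_image_plus_doubly[OF assms(1)]
      card_fst_image_eq_singly_plus_doubly[OF assms(1)]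
    by (simp add: min_def)
qed

context regular_graph
begin

lemma fibre_cut_ge_base_cuts:
  assumes "e \<in> E"
  shows "of_bool (\<exists>u v. e = {u, v} \<and> u \<in> fst ` S \<and> v \<in> V - fst ` S)
       + of_bool (\<exists>u v. e = {u, v} \<and> u \<in> doubly_covered S \<and> v \<in> V - doubly_covered S)
     \<le> real (fibre_cut (lift_edges E Y) (V \<times> UNIV) S e)"
proof -
  obtain u v where uv: "e = {u, v}" "u \<noteq> v" "u \<in> V" "v \<in> V" using assms by (rule edgeE)
  show ?thesis
    unfolding fibre_cut_lift_edges[OF assms uv] unfolding uv(1) doubleton_crosses_iff[OF uv(3,4)]
    by (cases "(u, False) \<in> S"; cases "(u, True) \<in> S"; cases "(v, False) \<in> S";
        cases "(v, True) \<in> S"; cases "Y {u, v}"; simp add: fst_image_bool_pairs doubly_covered_def)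
qed

lemma fibre_cut_ge_singly:
  assumes "e \<in> E"
  shows "real (card (e \<inter> singly_covered S))
           - 2 * of_bool (e \<subseteq> singly_covered S \<and> Y e = sealing_label S e)
         \<le> fibre_cut (lift_edges E Y) (V \<times> UNIV) S e"
proof -
  obtain u v where uv: "e = {u, v}" "u \<noteq> v" "u \<in> V" "v \<in> V" using assms by (rule edgeE)
  have "e \<inter> singly_covered S = {w \<in> {u, v}. w \<in> singly_covered S}" using uv(1) by blast
  hence card_singly: "card (e \<inter> singly_covered S)
      = of_bool (u \<in> singly_covered S) + of_bool (v \<in> singly_covered S)"
    using card_filter_doubleton[OF uv(2)] by simp
  have card_false: "card {w \<in> e. (w, False) \<in> S}
      = of_bool ((u, False) \<in> S) + of_bool ((v, False) \<in> S)"
    using card_filter_doubleton[OF uv(2)] uv(1) by simp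
  show ?thesis
    unfolding fibre_cut_lift_edges[OF assms uv] card_singly sealing_label_def card_false
    unfolding uv(1) by (cases "(u, False) \<in> S"; cases "(u, True) \<in> S"; cases "(v, False) \<in> S";
        cases "(v, True) \<in> S"; cases "Y {u, v}"; simp add: singly_covered_def)
qed

lemma cut_lift_ge_base_cuts:
  "real (cut_edges E (fst ` S) (V - fst ` S)) + real (cut_edges E (doubly_covered S) (V - doubly_covered S))
     \<le> real (cut_edges (lift_edges E Y) S (V \<times> UNIV - S))"
proof -
  have "real (cut_edges E (fst ` S) (V - fst ` S)) + real (cut_edges E (doubly_covered S) (V - doubly_covered S))
      = (\<Sum>e\<in>E. of_bool (\<exists>u v. e = {u, v} \<and> u \<in> fst ` S \<and> v \<in> V - fst ` S)
          + of_bool (\<exists>u v. e = {u, v} \<and> u \<in> doubly_covered S \<and> v \<in> V - doubly_covered S))"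
    unfolding cut_edges_def card_filter_eq_sum_of_bool[OF finite_E] sum.distrib by simp
  also have "\<dots> \<le> (\<Sum>e\<in>E. real (fibre_cut (lift_edges E Y) (V \<times> UNIV) S e))"
    by (rule sum_mono) (rule fibre_cut_ge_base_cuts)
  finally show ?thesis by (simp add: cut_lift_edges_eq_sum)
qed

lemma cut_lift_ge_singly:
  assumes "S \<subseteq> V \<times> UNIV"
  shows "real d * card (singly_covered S)
           - 2 * card {e \<in> E. e \<subseteq> singly_covered S \<and> Y e = sealing_label S e}
         \<le> real (cut_edges (lift_edges E Y) S (V \<times> UNIV - S))"
proof -
  let ?A = "singly_covered S"
  have "?A \<subseteq> V" using assms unfolding singly_covered_def by auto
  hence "d * card ?A = (\<Sum>e\<in>E. card (e \<inter> ?A))"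
    using sum_deg_eq_sum_card_Int[of ?A] deg_eq by (simp add: subset_iff mult.commute)
  hence "real d * card ?A = (\<Sum>e\<in>E. real (card (e \<inter> ?A)))"
    by (metis of_nat_mult of_nat_sum)
  hence "real d * card ?A - 2 * card {e \<in> E. e \<subseteq> ?A \<and> Y e = sealing_label S e}
      = (\<Sum>e\<in>E. real (card (e \<inter> ?A)) - 2 * of_bool (e \<subseteq> ?A \<and> Y e = sealing_label S e))"
    by (simp add: card_filter_eq_sum_of_bool[OF finite_E] sum_subtractf sum_distrib_left)
  also have "\<dots> \<le> (\<Sum>e\<in>E. real (fibre_cut (lift_edges E Y) (V \<times> UNIV) S e))"
    by (rule sum_mono) (rule fibre_cut_ge_singly)
  finally show ?thesis by (simp add: cut_lift_edges_eq_sum)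
qed

lemma cut_lift_ge_conductance_cover_weight:
  assumes "conductance V E \<ge> \<phi>" "\<phi> \<ge> 0" "d > 0" "S \<subseteq> V \<times> UNIV" "card S \<le> card V"
  shows "\<phi> * d * (min (card (fst ` S)) (card V - card (fst ` S)) + card (doubly_covered S))
           \<le> cut_edges (lift_edges E Y) S (V \<times> UNIV - S)"
proof -
  let ?U = "fst ` S" and ?B = "doubly_covered S"
  have "?U \<subseteq> V" "?B \<subseteq> V" using assms(4) unfolding doubly_covered_def by auto
  have "finite S" using assms(4) finite_V by (simp add: finite_subset)
  hence "2 * card ?B \<le> card V"
    using card_eq_card_fst_image_plus_doubly[of S] card_fst_image_eq_singly_plus_doubly[of S] assms(5)
    by simp
  have "\<phi> * d * min (card ?U) (card V - card ?U) \<le> cut_edges E ?U (V - ?U)"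
    by (rule cut_ge_conductance_min[OF assms(1-3) \<open>?U \<subseteq> V\<close>])
  moreover have "\<phi> * d * card ?B \<le> cut_edges E ?B (V - ?B)"
    by (rule cut_ge_conductance[OF assms(1,3) \<open>?B \<subseteq> V\<close> \<open>2 * card ?B \<le> card V\<close>])
  ultimately show ?thesis
    using cut_lift_ge_base_cuts[of S Y] by (simp add: distrib_left)
qed

lemma cut_lift_ge_of_few_singly:
  fixes c :: real
  assumes "conductance V E \<ge> \<phi>" "d > 0" "S \<subseteq> V \<times> UNIV" "card S \<le> card V"
    and "4 * card (singly_covered S) \<le> 3 * card V" "c \<le> \<phi> / 4"
  shows "c * d * card S \<le> cut_edges (lift_edges E Y) S (V \<times> UNIV - S)"
proof (cases "c \<le> 0")
  case True
  hence "c * d * card S \<le> 0" by (simp add: mult_nonpos_nonneg)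
  thus ?thesis using of_nat_0_le_iff[of "cut_edges (lift_edges E Y) S (V \<times> UNIV - S)"] by linarith
next
  case False
  hence "\<phi> \<ge> 0" using assms(6) by linarith
  define m where "m = min (card (fst ` S)) (card V - card (fst ` S)) + card (doubly_covered S)"
  have "finite S" using assms(3) finite_V by (simp add: finite_subset)
  moreover have "card (fst ` S) \<le> card V"
    using assms(3) finite_V by (intro card_mono) auto
  ultimately have "card S \<le> 4 * m"
    unfolding m_def using assms(4,5) by (rule card_le_four_cover_weight)
  have "c * card S \<le> \<phi> / 4 * card S" by (rule mult_right_mono[OF assms(6)]) simp
  also have "\<dots> \<le> \<phi> / 4 * (4 * m)"
    using \<open>card S \<le> 4 * m\<close> \<open>\<phi> \<ge> 0\<close> by (intro mult_left_mono) simp_all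
  finally have "c * card S \<le> \<phi> * m" by simp
  hence "c * card S * d \<le> \<phi> * m * d" by (rule mult_right_mono) simp
  thus ?thesis
    using cut_lift_ge_conductance_cover_weight[OF assms(1) \<open>\<phi> \<ge> 0\<close> assms(2-4), of Y]
    unfolding m_def by (simp add: mult_ac)
qed

definition small_cut_labelings :: "real \<Rightarrow> ('a \<times> bool) set \<Rightarrow> ('a set \<Rightarrow> bool) set" where
  "small_cut_labelings c S =
     {Y \<in> PiE E (\<lambda>_. UNIV). real (cut_edges (lift_edges E Y) S (V \<times> UNIV - S)) < c * d * card S}"

lemma card_small_cut_labelings_le_of_many_singly:
  assumes "S \<subseteq> V \<times> UNIV" "card S \<le> card V" "3 * card V < 4 * card (singly_covered S)"
    and "c \<le> 1 / 32"
  shows "real (card (small_cut_labelings c S)) \<le> 2 ^ card E * exp (- (real d * card V) / 256)"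
proof -
  let ?A = "singly_covered S"
  let ?sealed = "\<lambda>Y. real (card {e \<in> E. e \<subseteq> ?A \<and> Y e = sealing_label S e})"
  let ?t = "23 / 32 * real (card E)"
  have "small_cut_labelings c S \<subseteq> {Y \<in> PiE E (\<lambda>_. UNIV). ?t \<le> ?sealed Y}"
    unfolding small_cut_labelings_def
  proof safe
    fix Y assume "cut_edges (lift_edges E Y) S (V \<times> UNIV - S) < c * d * card S"
    moreover have "c * d * card S \<le> 1 / 32 * d * card V"
      using assms(2,4) by (intro mult_mono) auto
    moreover have "3 * real (card V) \<le> 4 * real (card ?A)"
      using assms(3) by linarith
    hence "real d * (3 * real (card V)) \<le> real d * (4 * real (card ?A))"
      by (rule mult_left_mono) simp
    hence "3 * real d * card V \<le> 4 * real d * card ?A" by (simp add: mult_ac)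
    moreover have "real d * card V = 2 * card E" using two_card_E by (simp flip: of_nat_mult)
    ultimately show "?t \<le> ?sealed Y" using cut_lift_ge_singly[OF assms(1), of Y] by linarith
  qed
  hence "real (card (small_cut_labelings c S)) \<le> real (card {Y \<in> PiE E (\<lambda>_. UNIV). ?t \<le> ?sealed Y})"
    using finite_E by (intro of_nat_mono card_mono) (simp_all add: finite_PiE)
  also have "\<dots> \<le> exp (- ?t) * (1 + exp 1) ^ card E"
    by (rule card_PiE_many_hits_le[OF finite_E]) blast
  also have "\<dots> \<le> 2 ^ card E * exp (- (real (card E) / 128))"
    by (rule exp_neg_mult_one_plus_exp_le)
  also have "real (card E) / 128 = real d * card V / 256"
    using two_card_E by (simp flip: of_nat_mult)
  finally show ?thesis by simp
qed

lemma card_small_cut_labelings_le: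
  assumes "conductance V E \<ge> \<phi>" "d > 0" "S \<subseteq> V \<times> UNIV" "card S \<le> card V"
  shows "real (card (small_cut_labelings (min (\<phi> / 4) (1 / 32)) S))
           \<le> 2 ^ card E * exp (- (real d * card V) / 256)"
proof (cases "4 * card (singly_covered S) \<le> 3 * card V")
  case True
  hence "small_cut_labelings (min (\<phi> / 4) (1 / 32)) S = {}"
    using cut_lift_ge_of_few_singly[OF assms True, of "min (\<phi> / 4) (1 / 32)"]
    unfolding small_cut_labelings_def by (auto simp: not_less)
  thus ?thesis by (simp del: min_less_iff_conj)
next
  case False
  thus ?thesis using assms(3,4) by (intro card_small_cut_labelings_le_of_many_singly) auto
qed

lemma card_Union_small_cut_labelings_le:
  assumes "conductance V E \<ge> \<phi>" "d > 0"
  shows "real (card (\<Union>S\<in>{S. S \<subseteq> V \<times> UNIV \<and> card S \<le> card V}.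
                       small_cut_labelings (min (\<phi> / 4) (1 / 32)) S))
           \<le> 2 ^ (2 * card V) * 2 ^ card E * exp (- (real d * card V) / 256)"
proof -
  let ?P = "{S. S \<subseteq> V \<times> (UNIV :: bool set) \<and> card S \<le> card V}"
  let ?bound = "2 ^ card E * exp (- (real d * card V) / 256) :: real"
  have fin_Pow: "finite (Pow (V \<times> (UNIV :: bool set)))" using finite_V by simp
  have P_sub: "?P \<subseteq> Pow (V \<times> UNIV)" by blast
  have "card ?P \<le> card (Pow (V \<times> (UNIV :: bool set)))" by (rule card_mono[OF fin_Pow P_sub])
  also have "\<dots> = 2 ^ (2 * card V)"
    using finite_V by (simp add: card_Pow card_cartesian_product mult.commute)
  finally have card_P: "real (card ?P) \<le> 2 ^ (2 * card V)" by (simp flip: of_nat_power)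
  have "real (card (\<Union>S\<in>?P. small_cut_labelings (min (\<phi> / 4) (1 / 32)) S))
      \<le> (\<Sum>S\<in>?P. real (card (small_cut_labelings (min (\<phi> / 4) (1 / 32)) S)))"
    using card_UN_le[OF finite_subset[OF P_sub fin_Pow]] by (simp flip: of_nat_sum)
  also have "\<dots> \<le> real (card ?P) * ?bound"
    using sum_mono[of ?P _ "\<lambda>_. ?bound"] card_small_cut_labelings_le[OF assms] by simp
  also have "\<dots> \<le> 2 ^ (2 * card V) * ?bound"
    using card_P by (rule mult_right_mono) simp
  finally show ?thesis by (simp add: mult.assoc)
qed

lemma conductance_lift_ge_of_no_small_cut:
  assumes "d > 0" "V \<noteq> {}"
    and "Y \<notin> (\<Union>S\<in>{S. S \<subseteq> V \<times> UNIV \<and> card S \<le> card V}. small_cut_labelings c S)"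
    and "Y \<in> PiE E (\<lambda>_. UNIV)"
  shows "c \<le> conductance (V \<times> UNIV) (lift_edges E Y)"
proof (rule regular_graph.conductance_geI[OF regular_graph_lift assms(1)])
  have "card (V \<times> (UNIV :: bool set)) = 2 * card V"
    using finite_V by (simp add: card_cartesian_product)
  thus "2 \<le> card (V \<times> (UNIV :: bool set))"
    using assms(2) finite_V by (simp add: Suc_le_eq card_gt_0_iff)
  fix S :: "('a \<times> bool) set"
  assume "S \<subseteq> V \<times> UNIV" "2 * card S \<le> card (V \<times> (UNIV :: bool set))"
  hence "Y \<notin> small_cut_labelings c S"
    using assms(3) \<open>card (V \<times> UNIV) = 2 * card V\<close> by auto
  thus "c * d * card S \<le> cut_edges (lift_edges E Y) S (V \<times> UNIV - S)"
    using assms(4) unfolding small_cut_labelings_def by (simp add: not_less)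
qed

end

lemma pos_of_union_bound_lt_one:
  assumes "2 ^ (2 * n) * exp (- (real d * real n) / 256) < (1 :: real)"
  shows "0 < n" "0 < d"
proof -
  have "exp (- (real d * real n) / 256) \<le> 2 ^ (2 * n) * exp (- (real d * real n) / 256)"
    using mult_right_mono[of 1 "2 ^ (2 * n)" "exp (- (real d * real n) / 256)"] by simp
  hence "exp (- (real d * real n) / 256) < 1" using assms by linarith
  hence "- (real d * real n) / 256 < 0" by (metis exp_less_cancel_iff exp_zero)
  hence "0 < real d * real n" by linarith
  thus "0 < n" "0 < d" by (simp_all add: zero_less_mult_iff)
qed

theorem mainTheorem15:
  fixes V :: "'a set" and E :: "'a set set" and d n :: nat and \<phi> :: real
  assumes "simple_graph V E"
    and "regular V E d"
    and "card V = n"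
    and "conductance V E \<ge> \<phi>"
  shows "measure_pmf.prob (pmf_of_set (PiE E (\<lambda>_. UNIV :: bool set)))
           {Y. conductance (V \<times> UNIV) (lift_edges E Y) \<ge> min (\<phi> / 4) (1 / 32)}
         \<ge> 1 - 2 ^ (2 * n) * exp (- (real d * real n) / 256)"
proof (cases "2 ^ (2 * n) * exp (- (real d * real n) / 256) < (1 :: real)")
  case False
  hence "1 - 2 ^ (2 * n) * exp (- (real d * real n) / 256) \<le> 0" by simp
  thus ?thesis using measure_nonneg order_trans by blast
next
  case True
  interpret regular_graph V E d using assms(1,2) by unfold_locales
  have "V \<noteq> {}" "d > 0" using pos_of_union_bound_lt_one[OF True] assms(3) by auto
  let ?Bad = "\<Union>S\<in>{S. S \<subseteq> V \<times> UNIV \<and> card S \<le> card V}. small_cut_labelings (min (\<phi> / 4) (1 / 32)) S"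
  have card_\<Omega>: "card (PiE E (\<lambda>_. UNIV :: bool set)) = 2 ^ card E"
    using finite_E by (simp add: card_PiE)
  show ?thesis
  proof (rule prob_pmf_of_set_ge)
    show "PiE E (\<lambda>_. UNIV) - ?Bad
        \<subseteq> {Y. conductance (V \<times> UNIV) (lift_edges E Y) \<ge> min (\<phi> / 4) (1 / 32)}"
    proof
      fix Y assume "Y \<in> PiE E (\<lambda>_. UNIV) - ?Bad"
      thus "Y \<in> {Y. conductance (V \<times> UNIV) (lift_edges E Y) \<ge> min (\<phi> / 4) (1 / 32)}"
        using conductance_lift_ge_of_no_small_cut[OF \<open>d > 0\<close> \<open>V \<noteq> {}\<close>, of Y] by simp
    qed
    show "?Bad \<subseteq> PiE E (\<lambda>_. UNIV)"
      by (rule UN_least) (simp add: small_cut_labelings_def)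
    show "real (card ?Bad) \<le> 2 ^ (2 * n) * exp (- (real d * real n) / 256) * card (PiE E (\<lambda>_. UNIV :: bool set))"
      using card_Union_small_cut_labelings_le[OF assms(4) \<open>d > 0\<close>] assms(3)
      unfolding card_\<Omega> by (simp add: mult_ac)
  qed (use finite_E in \<open>simp_all add: finite_PiE PiE_eq_empty_iff\<close>)
qed

end
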